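(* Let $\alpha$ be a curve in $\mathbb{R}^3$ with nonzero curvature, let $\alpha_T$ be its tangent indicatrix, and let $\beta$ be an evolute-direction curve of $\alpha_T$ (an $X$-direction curve of $\alpha_T$ with $N_\beta=T_T$). Then: (i) $\alpha$ is a helix if and only if $\beta$ is a helix; (ii) $\alpha$ is a slant helix if and only if $\beta$ is a slant helix.
   Context: Let $\alpha:I\subset\mathbb{R}\to\mathbb{R}^3$ be a unit-speed curve with arc length $s$, curvature $\kappa>0$, torsion $\tau$ and Frenet frame $\{T,N,B\}$. The tangent indicatrix of $\alpha$ is the curve $\alpha_T=T$ on the unit sphere. Its arc length is $s_T=\int\kappa\,ds$. Its Frenet apparatus is $\{T_T,N_T,B_T,\kappa_T,\tau_T\}$, with $\frac{dT_T}{ds_T}=\kappa_TN_T$, $\frac{dN_T}{ds_T}=-\kappa_TT_T+\tau_TB_T$ and $\frac{dB_T}{ds_T}=-\tau_TN_T$. Let $x,y,z$ be real functions of $s_T$ with $x^2+y^2+z^2=1$, and set $X=xT_T+yN_T+zB_T$. An integral curve $\beta$ of $X$, meaning $d\beta/ds_T=X$, is an $X$-direction curve of $\alpha_T$. It is regarded as a unit-speed Frenet curve with frame $\{T_\beta=X,N_\beta,B_\beta\}$, curvature $\kappa_\beta>0$ and torsion $\tau_\beta$. $\beta$ is an evolute-direction curve of $\alpha_T$ if $N_\beta=T_T$. A curve with curvature $k>0$ and torsion $t$ is a helix if its unit tangent makes a constant angle with a fixed line; equivalently, $t/k$ is constant. It is a slant helix if its principal normal makes a constant angle with a fixed line; equivalently,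 $\frac{k^2}{(k^2+t^2)^{3/2}}(t/k)'$ is constant, where $'$ is the derivative with respect to arc length. *)

theory Defs
  imports "HOL-Analysis.Analysis"
begin

definition frenet_curve ::
  "real set \<Rightarrow> (real \<Rightarrow> real^3) \<Rightarrow> (real \<Rightarrow> real^3) \<Rightarrow> (real \<Rightarrow> real^3)
   \<Rightarrow> (real \<Rightarrow> real^3) \<Rightarrow> (real \<Rightarrow> real) \<Rightarrow> (real \<Rightarrow> real) \<Rightarrow> bool" where
  "frenet_curve I c T N B k t \<longleftrightarrow>
     is_interval I \<and> open I \<and>
     (\<forall>s\<in>I.
        norm (T s) = 1 \<and> norm (N s) = 1 \<and> T s \<bullet> N s = 0 \<and> B s = cross3 (T s) (N s) \<and>
        k s > 0 \<and>
        (c has_vector_derivative T s) (at s) \<and>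
        (T has_vector_derivative k s *\<^sub>R N s) (at s) \<and>
        (N has_vector_derivative (- k s *\<^sub>R T s + t s *\<^sub>R B s)) (at s) \<and>
        (B has_vector_derivative (- t s *\<^sub>R N s)) (at s))"

definition helix :: "real set \<Rightarrow> (real \<Rightarrow> real^3) \<Rightarrow> bool" where
  "helix I T \<longleftrightarrow> (\<exists>u c. norm u = 1 \<and> (\<forall>s\<in>I. T s \<bullet> u = c))"

definition slant_helix :: "real set \<Rightarrow> (real \<Rightarrow> real^3) \<Rightarrow> bool" where
  "slant_helix I N \<longleftrightarrow> (\<exists>u c. norm u = 1 \<and> (\<forall>s\<in>I. N s \<bullet> u = c))"

end

theory Submission
  imports Defs
begin

text \<open>Since \<open>\<alpha>\<^sub>T \<circ> \<sigma> = T\<close> and \<open>\<sigma>' = \<kappa>\<close>, the chain rule gives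
  \<open>\<kappa> T\<^sub>T(\<sigma> s) = T'(s) = \<kappa> N(s)\<close>: the tangent of the tangent indicatrix is the principal
  normal of \<open>\<alpha>\<close>. The evolute condition \<open>N\<^sub>\<beta> = T\<^sub>T\<close> thus says \<open>N\<^sub>\<beta> \<circ> \<sigma> = N\<close>, which settles
  the slant helix part at once. For helices, \<open>(T \<bullet> u)' = \<kappa> (N \<bullet> u)\<close> with \<open>\<kappa> > 0\<close>, so a Frenet
  curve is a helix iff its principal normal stays orthogonal to a fixed unit vector; applied to
  \<open>\<alpha>\<close> and to \<open>\<beta>\<close>, this transfers the helix property.\<close>

lemma has_real_derivative_inner_const:
  assumes "(f has_vector_derivative f') (at s)"
  shows "((\<lambda>s. f s \<bullet> u) has_real_derivative f' \<bullet> u) (at s)"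
  using bounded_linear.has_vector_derivative[OF bounded_linear_inner_left assms, of u]
  by (simp add: has_real_derivative_iff_has_vector_derivative)

lemma frenet_tangent_inner_constant_iff:
  assumes fc: "frenet_curve J c T N B k t"
  shows "(\<exists>a. \<forall>s\<in>J. T s \<bullet> u = a) \<longleftrightarrow> (\<forall>s\<in>J. N s \<bullet> u = 0)"
proof -
  have J: "open J" "convex J"
    using fc by (auto simp: frenet_curve_def is_interval_convex)
  have deriv: "((\<lambda>s. T s \<bullet> u) has_real_derivative k s * (N s \<bullet> u)) (at s)"
    and k_pos: "k s > 0" if "s \<in> J" for s
    using fc that has_real_derivative_inner_const[of T "k s *\<^sub>R N s" s u]
    by (auto simp: frenet_curve_def)
  show ?thesis
  proof
    assume "\<exists>a. \<forall>s\<in>J. T s \<bullet> u = a"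
    then obtain a where a: "\<forall>s\<in>J. T s \<bullet> u = a" by blast
    show "\<forall>s\<in>J. N s \<bullet> u = 0"
    proof
      fix s assume s: "s \<in> J"
      have "((\<lambda>s. T s \<bullet> u) has_real_derivative 0) (at s)"
        using has_field_derivative_transform_within_open[OF _ J(1) s, of "\<lambda>_. a"] a by auto
      then have "k s * (N s \<bullet> u) = 0"
        using DERIV_unique[OF deriv[OF s]] by blast
      then show "N s \<bullet> u = 0" using k_pos[OF s] by simp
    qed
  next
    assume "\<forall>s\<in>J. N s \<bullet> u = 0"
    then have "((\<lambda>s. T s \<bullet> u) has_real_derivative 0) (at s within J)" if "s \<in> J" for s
      using deriv[OF that] that by (auto intro: has_field_derivative_at_within)
    then show "\<exists>a. \<forall>s\<in>J. T s \<bullet> u = a"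
      using has_field_derivative_zero_constant[OF J(2)] by blast
  qed
qed

lemma helix_iff_normal_orthogonal:
  assumes "frenet_curve J c T N B k t"
  shows "helix J T \<longleftrightarrow> (\<exists>u. norm u = 1 \<and> (\<forall>s\<in>J. N s \<bullet> u = 0))"
  unfolding helix_def using frenet_tangent_inner_constant_iff[OF assms] by blast

lemma tangent_indicatrix_tangent_eq_normal:
  assumes alpha: "frenet_curve I \<alpha> T N B \<kappa> \<tau>"
    and arclen: "(\<sigma> has_real_derivative \<kappa> s) (at s)"
    and indicatrix: "\<And>s. s \<in> I \<Longrightarrow> \<alpha>T (\<sigma> s) = T s"
    and tangent: "(\<alpha>T has_vector_derivative TT (\<sigma> s)) (at (\<sigma> s))"
    and s: "s \<in> I"
  shows "TT (\<sigma> s) = N s"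
proof -
  have I_open: "open I" and T_deriv: "(T has_vector_derivative \<kappa> s *\<^sub>R N s) (at s)"
    and \<kappa>_pos: "\<kappa> s > 0"
    using alpha s by (auto simp: frenet_curve_def)
  have "(\<sigma> has_vector_derivative \<kappa> s) (at s)"
    using arclen by (simp add: has_real_derivative_iff_has_vector_derivative)
  from vector_diff_chain_at[OF this tangent]
  have "((\<alpha>T \<circ> \<sigma>) has_vector_derivative \<kappa> s *\<^sub>R TT (\<sigma> s)) (at s)" .
  then have "(T has_vector_derivative \<kappa> s *\<^sub>R TT (\<sigma> s)) (at s)"
    by (rule has_vector_derivative_transform_within_open[OF _ I_open s]) (simp add: indicatrix)
  from vector_derivative_unique_at[OF this T_deriv]
  have "\<kappa> s *\<^sub>R TT (\<sigma> s) = \<kappa> s *\<^sub>R N s" .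
  with \<kappa>_pos show ?thesis by simp
qed

theorem theorem4p7:
  fixes I :: "real set"
    and \<alpha> T N B :: "real \<Rightarrow> real^3" and \<kappa> \<tau> :: "real \<Rightarrow> real"
    and \<sigma> :: "real \<Rightarrow> real"
    and \<alpha>T TT NT BT :: "real \<Rightarrow> real^3" and \<kappa>T \<tau>T :: "real \<Rightarrow> real"
    and x y z :: "real \<Rightarrow> real"
    and \<beta> T\<beta> N\<beta> B\<beta> :: "real \<Rightarrow> real^3" and \<kappa>\<beta> \<tau>\<beta> :: "real \<Rightarrow> real"
  assumes alpha: "frenet_curve I \<alpha> T N B \<kappa> \<tau>"
    and arclen: "\<forall>s\<in>I. (\<sigma> has_real_derivative \<kappa> s) (at s)"
    and indicatrix: "\<forall>s\<in>I. \<alpha>T (\<sigma> s) = T s"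
    and alphaT: "frenet_curve (\<sigma> ` I) \<alpha>T TT NT BT \<kappa>T \<tau>T"
    and xyz: "\<forall>u\<in>\<sigma> ` I. (x u)\<^sup>2 + (y u)\<^sup>2 + (z u)\<^sup>2 = 1"
    and beta: "frenet_curve (\<sigma> ` I) \<beta> T\<beta> N\<beta> B\<beta> \<kappa>\<beta> \<tau>\<beta>"
    and X: "\<forall>u\<in>\<sigma> ` I. T\<beta> u = x u *\<^sub>R TT u + y u *\<^sub>R NT u + z u *\<^sub>R BT u"
    and evolute: "\<forall>u\<in>\<sigma> ` I. N\<beta> u = TT u"
  shows "(helix I T \<longleftrightarrow> helix (\<sigma> ` I) T\<beta>) \<and>
         (slant_helix I N \<longleftrightarrow> slant_helix (\<sigma> ` I) N\<beta>)"
proof -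
  have normal: "N\<beta> (\<sigma> s) = N s" if s: "s \<in> I" for s
  proof -
    have "(\<alpha>T has_vector_derivative TT (\<sigma> s)) (at (\<sigma> s))"
      using alphaT s by (auto simp: frenet_curve_def)
    with tangent_indicatrix_tangent_eq_normal[OF alpha _ _ _ s] arclen indicatrix
    have "TT (\<sigma> s) = N s" using s by blast
    then show ?thesis using evolute s by simp
  qed
  have "helix I T \<longleftrightarrow> helix (\<sigma> ` I) T\<beta>"
    unfolding helix_iff_normal_orthogonal[OF alpha] helix_iff_normal_orthogonal[OF beta]
    using normal by auto
  moreover have "slant_helix I N \<longleftrightarrow> slant_helix (\<sigma> ` I) N\<beta>"
    unfolding slant_helix_def using normal by auto
  ultimately show ?thesis by blast
qed

end
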